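(* In $TTR$, if $x_1:A_1,\dots,x_n:A_n\vdash_{TTR}t:A$, $B_i\subseteq A_i$ for $1\le i\le n$, and $A\subseteq B$, then $x_1:B_1,\dots,x_n:B_n\vdash_{TTR}t:B$.
   Context: $TTR$ types: over a second-order language with first-order variables, function symbols, $n$-ary predicate variables and symbols, and a fixed system $\mathbf E$ of equations; atomic $\perp$ and $X(t_1,\dots,t_n)$; constructors $\to$, $\forall x$, $\forall X$, and $\mu Cx_1\dots x_nA\langle t_1,\dots,t_n\rangle$ for $C$ an $n$-ary predicate symbol occurring and positive in $A$. Subtyping $\subseteq$ is generated by: reflexivity; $A\subseteq A',B\subseteq B'\Rightarrow A'\to B\subseteq A\to B'$; $A[G/v]\subseteq B\Rightarrow\forall vA\subseteq B$; $A\subseteq B\Rightarrow A\subseteq\forall vB$ ($v$ not free in $A$); $A\subseteq B[v/y]\Rightarrow A\subseteq B[w/y]$ for $v=w$ an instance of an equation of $\mathbf E$; transitivity; $D[\mu C\bar xD\langle\bar z\rangle/C(\bar z)][\bar t/\bar x]\subseteq\mu C\bar xD\langle\bar t\rangle$ and its converse; $D[E/C(\bar x)]\subseteq E\Rightarrow\mu C\bar xD\langle\bar t\rangle\subseteq E[\bar t/\bar x]$. Typing $\vdash_{TTR}$: variable axiom $\Gamma,x:A\vdash x:A$; $\to$-intro/elim; $\forall$-intro (variable not free in context) and elimination (by terms or formulas) for first- and second-order variables; equational rule for instances of $\mathbf E$; subsumption: from $t:A$ and $A\subseteq B$ infer $t:B$; rule (Y): from $\Gamma\vdash t:\forall\bar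 x[C(\bar x)\to E]\to\forall\bar x[D\to E]$ infer $\Gamma\vdash(Y)t:\forall\bar x[\mu C\bar xD\langle\bar x\rangle\to E]$ ($C$ not free in $E$ nor $\Gamma$; $Y$ Turing's fixed point combinator). *)

theory Defs
  imports Main
begin

text \<open>First-order terms: bound variables (de Bruijn indices), free first-order
  variables (names), and applications of function symbols.\<close>
datatype trm = BV nat | FV nat | Fn nat "trm list"

text \<open>Predicates: bound second-order variables (de Bruijn indices, bound by
  second-order \<forall> or by \<mu>), free n-ary predicate variables (name, arity),
  and n-ary predicate symbols (name, arity).\<close>
datatype prd = PB nat | PV nat nat | PS nat nat

text \<open>Types.  \<open>All A\<close> binds first-order index 0 in A; \<open>All2 n A\<close> binds an n-ary
  second-order index 0 in A; \<open>Mu n D ts\<close> is \<open>\<mu>C x_1..x_n D \<langle>ts\<rangle>\<close>: in D the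
  n-ary C is second-order index 0 and x_(i+1) is first-order index i.\<close>
datatype fm = Bot | Atom prd "trm list" | Imp fm fm | All fm | All2 nat fm
  | Mu nat fm "trm list"

definition Alls :: "nat \<Rightarrow> fm \<Rightarrow> fm" where
  "Alls n A = (All ^^ n) A"

definition bvs :: "nat \<Rightarrow> trm list" where
  "bvs n = map BV [0..<n]"

fun liftt :: "nat \<Rightarrow> nat \<Rightarrow> trm \<Rightarrow> trm" where
  "liftt c k (BV m) = BV (if m < c then m else m + k)"
| "liftt c k (FV x) = FV x"
| "liftt c k (Fn f ts) = Fn f (map (liftt c k) ts)"

fun liftf :: "nat \<Rightarrow> nat \<Rightarrow> fm \<Rightarrow> fm" where
  "liftf c k Bot = Bot"
| "liftf c k (Atom p ts) = Atom p (map (liftt c k) ts)"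
| "liftf c k (Imp A B) = Imp (liftf c k A) (liftf c k B)"
| "liftf c k (All A) = All (liftf (Suc c) k A)"
| "liftf c k (All2 n A) = All2 n (liftf c k A)"
| "liftf c k (Mu n D ts) = Mu n (liftf (c + n) k D) (map (liftt c k) ts)"

fun liftso :: "nat \<Rightarrow> nat \<Rightarrow> fm \<Rightarrow> fm" where
  "liftso c k Bot = Bot"
| "liftso c k (Atom p ts) =
     (case p of PB j \<Rightarrow> Atom (PB (if j < c then j else j + k)) ts | _ \<Rightarrow> Atom p ts)"
| "liftso c k (Imp A B) = Imp (liftso c k A) (liftso c k B)"
| "liftso c k (All A) = All (liftso c k A)"
| "liftso c k (All2 n A) = All2 n (liftso (Suc c) k A)"
| "liftso c k (Mu n D ts) = Mu n (liftso (Suc c) k D) ts"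

text \<open>Simultaneous substitution of \<open>us ! i\<close> for first-order index \<open>d + i\<close>
  (d = number of first-order binders passed); higher indices are decremented.\<close>
fun substt :: "nat \<Rightarrow> trm list \<Rightarrow> trm \<Rightarrow> trm" where
  "substt d us (BV m) =
     (if m < d then BV m
      else if m - d < length us then liftt 0 d (us ! (m - d))
      else BV (m - length us))"
| "substt d us (FV x) = FV x"
| "substt d us (Fn f ts) = Fn f (map (substt d us) ts)"

fun substf :: "nat \<Rightarrow> trm list \<Rightarrow> fm \<Rightarrow> fm" where
  "substf d us Bot = Bot"
| "substf d us (Atom p ts) = Atom p (map (substt d us) ts)"
| "substf d us (Imp A B) = Imp (substf d us A) (substf d us B)"
| "substf d us (All A) = All (substf (Suc d) us A)"
| "substf d us (All2 n A) = All2 n (substf d us A)"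
| "substf d us (Mu n D ts) = Mu n (substf (d + n) us D) (map (substt d us) ts)"

text \<open>Second-order substitution \<open>A[G/X]\<close>: the second-order index \<open>e\<close> (e = number of
  second-order binders passed, d = number of first-order binders passed) is
  replaced by the n-ary abstraction G (its first-order indices 0..n-1 are the
  parameters); an atom \<open>X(ts)\<close> becomes \<open>G[ts/params]\<close>.\<close>
fun substso :: "nat \<Rightarrow> nat \<Rightarrow> fm \<Rightarrow> fm \<Rightarrow> fm" where
  "substso e d G Bot = Bot"
| "substso e d G (Atom p ts) =
     (case p of
        PB j \<Rightarrow> (if j < e then Atom (PB j) ts
                 else if j = e then substf 0 ts (liftf (length ts) d (liftso 0 e G))
                 else Atom (PB (j - 1)) ts)
      | _ \<Rightarrow> Atom p ts)"
| "substso e d G (Imp A B) = Imp (substso e d G A) (substso e d G B)"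
| "substso e d G (All A) = All (substso e (Suc d) G A)"
| "substso e d G (All2 n A) = All2 n (substso (Suc e) d G A)"
| "substso e d G (Mu n D ts) = Mu n (substso (Suc e) (d + n) G D) ts"

fun closeso :: "nat \<times> nat \<Rightarrow> nat \<Rightarrow> fm \<Rightarrow> fm" where
  "closeso c e Bot = Bot"
| "closeso c e (Atom p ts) =
     (case p of
        PB j \<Rightarrow> Atom (PB (if j < e then j else Suc j)) ts
      | PS s m \<Rightarrow> (if (s, m) = c then Atom (PB e) ts else Atom p ts)
      | _ \<Rightarrow> Atom p ts)"
| "closeso c e (Imp A B) = Imp (closeso c e A) (closeso c e B)"
| "closeso c e (All A) = All (closeso c e A)"
| "closeso c e (All2 n A) = All2 n (closeso c (Suc e) A)"
| "closeso c e (Mu n D ts) = Mu n (closeso c (Suc e) D) ts"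

fun fvt :: "trm \<Rightarrow> nat set" where
  "fvt (BV m) = {}"
| "fvt (FV x) = {x}"
| "fvt (Fn f ts) = (\<Union>t\<in>set ts. fvt t)"

fun fvf :: "fm \<Rightarrow> nat set" where
  "fvf Bot = {}"
| "fvf (Atom p ts) = (\<Union>t\<in>set ts. fvt t)"
| "fvf (Imp A B) = fvf A \<union> fvf B"
| "fvf (All A) = fvf A"
| "fvf (All2 n A) = fvf A"
| "fvf (Mu n D ts) = fvf D \<union> (\<Union>t\<in>set ts. fvt t)"

fun fvso :: "fm \<Rightarrow> (nat \<times> nat) set" where
  "fvso Bot = {}"
| "fvso (Atom p ts) = (case p of PV x m \<Rightarrow> {(x, m)} | _ \<Rightarrow> {})"
| "fvso (Imp A B) = fvso A \<union> fvso B"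
| "fvso (All A) = fvso A"
| "fvso (All2 n A) = fvso A"
| "fvso (Mu n D ts) = fvso D"

fun syms :: "fm \<Rightarrow> (nat \<times> nat) set" where
  "syms Bot = {}"
| "syms (Atom p ts) = (case p of PS s m \<Rightarrow> {(s, m)} | _ \<Rightarrow> {})"
| "syms (Imp A B) = syms A \<union> syms B"
| "syms (All A) = syms A"
| "syms (All2 n A) = syms A"
| "syms (Mu n D ts) = syms D"

fun lct :: "nat \<Rightarrow> trm \<Rightarrow> bool" where
  "lct k (BV m) = (m < k)"
| "lct k (FV x) = True"
| "lct k (Fn f ts) = (\<forall>t\<in>set ts. lct k t)"

fun occ :: "nat \<Rightarrow> fm \<Rightarrow> bool" where
  "occ j Bot = False"
| "occ j (Atom p ts) = (p = PB j)"
| "occ j (Imp A B) = (occ j A \<or> occ j B)"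
| "occ j (All A) = occ j A"
| "occ j (All2 n A) = occ (Suc j) A"
| "occ j (Mu n D ts) = occ (Suc j) D"

fun pol :: "bool \<Rightarrow> nat \<Rightarrow> fm \<Rightarrow> bool" where
  "pol b j Bot = True"
| "pol b j (Atom p ts) = (b \<or> p \<noteq> PB j)"
| "pol b j (Imp A B) = (pol (\<not> b) j A \<and> pol b j B)"
| "pol b j (All A) = pol b j A"
| "pol b j (All2 n A) = pol b (Suc j) A"
| "pol b j (Mu n D ts) = pol b (Suc j) D"

text \<open>\<open>wf k ar A\<close>: A is well formed with k first-order bound variables in scope
  and second-order bound variables of arities \<open>ar\<close> in scope.\<close>
fun wf :: "nat \<Rightarrow> nat list \<Rightarrow> fm \<Rightarrow> bool" where
  "wf k ar Bot = True"
| "wf k ar (Atom p ts) =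
     ((\<forall>t\<in>set ts. lct k t) \<and>
      (case p of PB j \<Rightarrow> j < length ar \<and> length ts = ar ! j
               | PV x m \<Rightarrow> length ts = m
               | PS s m \<Rightarrow> length ts = m))"
| "wf k ar (Imp A B) = (wf k ar A \<and> wf k ar B)"
| "wf k ar (All A) = wf (Suc k) ar A"
| "wf k ar (All2 n A) = wf k (n # ar) A"
| "wf k ar (Mu n D ts) =
     (wf (k + n) (n # ar) D \<and> length ts = n \<and> (\<forall>t\<in>set ts. lct k t)
      \<and> occ 0 D \<and> pol True 0 D)"

definition ty :: "fm \<Rightarrow> bool" where
  "ty A = wf 0 [] A"

fun tsub :: "(nat \<Rightarrow> trm) \<Rightarrow> trm \<Rightarrow> trm" where
  "tsub \<sigma> (BV m) = BV m"
| "tsub \<sigma> (FV x) = \<sigma> x"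
| "tsub \<sigma> (Fn f ts) = Fn f (map (tsub \<sigma>) ts)"

definition eq_inst :: "(trm \<times> trm) set \<Rightarrow> trm \<Rightarrow> trm \<Rightarrow> bool" where
  "eq_inst Eqs v w \<longleftrightarrow> (\<exists>l r \<sigma>. (l, r) \<in> Eqs \<and> (\<forall>x. lct 0 (\<sigma> x)) \<and>
      ((v = tsub \<sigma> l \<and> w = tsub \<sigma> r) \<or> (v = tsub \<sigma> r \<and> w = tsub \<sigma> l)))"

text \<open>Unfolding \<open>D[\<mu>C x D\<langle>z\<rangle>/C(z)][ts/x]\<close>.\<close>
definition unfold :: "nat \<Rightarrow> fm \<Rightarrow> trm list \<Rightarrow> fm" where
  "unfold n D ts = substf 0 ts (substso 0 0 (Mu n (liftf n (2 * n) D) (bvs n)) D)"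

inductive sub :: "(trm \<times> trm) set \<Rightarrow> fm \<Rightarrow> fm \<Rightarrow> bool" for Eqs where
  s_refl: "sub Eqs A A"
| s_imp: "sub Eqs A A' \<Longrightarrow> sub Eqs B B' \<Longrightarrow> sub Eqs (Imp A' B) (Imp A B')"
| s_allL: "sub Eqs (substf 0 [u] A) B \<Longrightarrow> lct 0 u \<Longrightarrow> sub Eqs (All A) B"
| s_all2L: "sub Eqs (substso 0 0 G A) B \<Longrightarrow> wf n [] G \<Longrightarrow> sub Eqs (All2 n A) B"
| s_allR: "sub Eqs A (substf 0 [FV x] B) \<Longrightarrow> x \<notin> fvf A \<Longrightarrow> x \<notin> fvf B
           \<Longrightarrow> sub Eqs A (All B)"
| s_all2R: "sub Eqs A (substso 0 0 (Atom (PV X n) (bvs n)) B) \<Longrightarrow> (X, n) \<notin> fvso A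
           \<Longrightarrow> (X, n) \<notin> fvso B \<Longrightarrow> sub Eqs A (All2 n B)"
| s_eq: "sub Eqs A (substf 0 [v] B) \<Longrightarrow> eq_inst Eqs v w \<Longrightarrow> sub Eqs A (substf 0 [w] B)"
| s_trans: "sub Eqs A B \<Longrightarrow> sub Eqs B C \<Longrightarrow> sub Eqs A C"
| s_fold: "ty (Mu n D ts) \<Longrightarrow> sub Eqs (unfold n D ts) (Mu n D ts)"
| s_unfold: "ty (Mu n D ts) \<Longrightarrow> sub Eqs (Mu n D ts) (unfold n D ts)"
| s_ind: "ty (Mu n D ts) \<Longrightarrow> length ys = n \<Longrightarrow> distinct ys
          \<Longrightarrow> set ys \<inter> (fvf D \<union> fvf F) = {}
          \<Longrightarrow> sub Eqs (substf 0 (map FV ys) (substso 0 0 (liftf n n F) D))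
                     (substf 0 (map FV ys) F)
          \<Longrightarrow> sub Eqs (Mu n D ts) (substf 0 ts F)"

datatype lam = LVar nat | LApp lam lam | LAbs nat lam

text \<open>Turing's fixed point combinator \<open>(\<lambda>x y. y (x x y)) (\<lambda>x y. y (x x y))\<close>.\<close>
definition Theta :: lam where
  "Theta = (let W = LAbs 0 (LAbs 1 (LApp (LVar 1) (LApp (LApp (LVar 0) (LVar 0)) (LVar 1))))
            in LApp W W)"

type_synonym ctx = "nat \<Rightarrow> fm option"

definition fv_ctx :: "ctx \<Rightarrow> nat set" where
  "fv_ctx \<Gamma> = (\<Union>A\<in>ran \<Gamma>. fvf A)"

definition fvso_ctx :: "ctx \<Rightarrow> (nat \<times> nat) set" where
  "fvso_ctx \<Gamma> = (\<Union>A\<in>ran \<Gamma>. fvso A)"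

definition syms_ctx :: "ctx \<Rightarrow> (nat \<times> nat) set" where
  "syms_ctx \<Gamma> = (\<Union>A\<in>ran \<Gamma>. syms A)"

inductive typing :: "(trm \<times> trm) set \<Rightarrow> ctx \<Rightarrow> lam \<Rightarrow> fm \<Rightarrow> bool" for Eqs where
  t_var: "\<Gamma> x = Some A \<Longrightarrow> typing Eqs \<Gamma> (LVar x) A"
| t_abs: "typing Eqs (\<Gamma>(x \<mapsto> A)) t B \<Longrightarrow> typing Eqs \<Gamma> (LAbs x t) (Imp A B)"
| t_app: "typing Eqs \<Gamma> t (Imp A B) \<Longrightarrow> typing Eqs \<Gamma> u A \<Longrightarrow> typing Eqs \<Gamma> (LApp t u) B"
| t_allI: "typing Eqs \<Gamma> t (substf 0 [FV x] A) \<Longrightarrow> x \<notin> fv_ctx \<Gamma> \<Longrightarrow> x \<notin> fvf A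
           \<Longrightarrow> typing Eqs \<Gamma> t (All A)"
| t_allE: "typing Eqs \<Gamma> t (All A) \<Longrightarrow> lct 0 u \<Longrightarrow> typing Eqs \<Gamma> t (substf 0 [u] A)"
| t_all2I: "typing Eqs \<Gamma> t (substso 0 0 (Atom (PV X n) (bvs n)) A) \<Longrightarrow> (X, n) \<notin> fvso_ctx \<Gamma>
           \<Longrightarrow> (X, n) \<notin> fvso A \<Longrightarrow> typing Eqs \<Gamma> t (All2 n A)"
| t_all2E: "typing Eqs \<Gamma> t (All2 n A) \<Longrightarrow> wf n [] G \<Longrightarrow> typing Eqs \<Gamma> t (substso 0 0 G A)"
| t_eq: "typing Eqs \<Gamma> t (substf 0 [v] A) \<Longrightarrow> eq_inst Eqs v w \<Longrightarrow> typing Eqs \<Gamma> t (substf 0 [w] A)"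
| t_sub: "typing Eqs \<Gamma> t A \<Longrightarrow> sub Eqs A B \<Longrightarrow> typing Eqs \<Gamma> t B"
| t_Y: "typing Eqs \<Gamma> t (Imp (Alls n (Imp (Atom (PS c n) (bvs n)) F)) (Alls n (Imp D F)))
        \<Longrightarrow> (c, n) \<notin> syms F \<Longrightarrow> (c, n) \<notin> syms_ctx \<Gamma>
        \<Longrightarrow> ty (Alls n (Imp (Mu n (liftf n n (closeso (c, n) 0 D)) (bvs n)) F))
        \<Longrightarrow> typing Eqs \<Gamma> (LApp Theta t)
              (Alls n (Imp (Mu n (liftf n n (closeso (c, n) 0 D)) (bvs n)) F))"

end

theory Submission
  imports Defs "HOL-Combinatorics.Transposition"
begin

text \<open>Widening the type is one subsumption step; narrowing the context is proved by induction
  on the typing derivation.  The only obstacle is the eigenvariable side conditions of the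
  \<open>\<forall>\<close>-introductions and of (Y): a name fresh for the old context need not be fresh for the
  narrower one.  The induction is therefore generalised over injective renamings of free
  variables, predicate variables and predicate symbols, which preserve subtyping; in an
  eigenvariable case the renaming is composed with a transposition sending the eigenvariable
  to a name fresh for both contexts.\<close>

fun rename_trm :: "(nat \<Rightarrow> nat) \<Rightarrow> trm \<Rightarrow> trm" where
  "rename_trm f (BV m) = BV m"
| "rename_trm f (FV x) = FV (f x)"
| "rename_trm f (Fn s ts) = Fn s (map (rename_trm f) ts)"

text \<open>The first argument of \<open>g\<close> and \<open>h\<close> is the arity of the renamed predicate.\<close>
fun rename_prd :: "(nat \<Rightarrow> nat \<Rightarrow> nat) \<Rightarrow> (nat \<Rightarrow> nat \<Rightarrow> nat) \<Rightarrow> prd \<Rightarrow> prd" where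
  "rename_prd g h (PB j) = PB j"
| "rename_prd g h (PV X m) = PV (g m X) m"
| "rename_prd g h (PS s m) = PS (h m s) m"

fun rename_fm ::
  "(nat \<Rightarrow> nat) \<Rightarrow> (nat \<Rightarrow> nat \<Rightarrow> nat) \<Rightarrow> (nat \<Rightarrow> nat \<Rightarrow> nat) \<Rightarrow> fm \<Rightarrow> fm" where
  "rename_fm f g h Bot = Bot"
| "rename_fm f g h (Atom p ts) = Atom (rename_prd g h p) (map (rename_trm f) ts)"
| "rename_fm f g h (Imp A B) = Imp (rename_fm f g h A) (rename_fm f g h B)"
| "rename_fm f g h (All A) = All (rename_fm f g h A)"
| "rename_fm f g h (All2 n A) = All2 n (rename_fm f g h A)"
| "rename_fm f g h (Mu n D ts) = Mu n (rename_fm f g h D) (map (rename_trm f) ts)"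

lemma rename_trm_liftt: "rename_trm f (liftt c k t) = liftt c k (rename_trm f t)"
  by (induction t) auto

lemma rename_trm_substt:
  "rename_trm f (substt d us t) = substt d (map (rename_trm f) us) (rename_trm f t)"
  by (induction t) (auto simp: rename_trm_liftt)

lemma lct_rename_trm [simp]: "lct k (rename_trm f t) = lct k t"
  by (induction t) auto

lemma fvt_rename_trm: "fvt (rename_trm f t) = f ` fvt t"
  by (induction t) auto

lemma rename_trm_cong: "(\<And>x. x \<in> fvt t \<Longrightarrow> f x = f' x) \<Longrightarrow> rename_trm f t = rename_trm f' t"
  by (induction t) auto

lemma rename_trm_id [simp]: "rename_trm (\<lambda>x. x) t = t"
  by (induction t) (auto simp: map_idI)

lemma rename_trm_tsub: "rename_trm f (tsub \<sigma> l) = tsub (rename_trm f \<circ> \<sigma>) l"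
  by (induction l) auto

lemma eq_inst_rename_trm:
  assumes "eq_inst Eqs v w"
  shows "eq_inst Eqs (rename_trm f v) (rename_trm f w)"
proof -
  obtain l r \<sigma> where "(l, r) \<in> Eqs" "\<forall>x. lct 0 (\<sigma> x)"
    and "(v = tsub \<sigma> l \<and> w = tsub \<sigma> r) \<or> (v = tsub \<sigma> r \<and> w = tsub \<sigma> l)"
    using assms unfolding eq_inst_def by blast
  then show ?thesis
    unfolding eq_inst_def
    by (intro exI[of _ l] exI[of _ r] exI[of _ "rename_trm f \<circ> \<sigma>"]) (auto simp: rename_trm_tsub)
qed

lemma finite_fvt: "finite (fvt t)"
  by (induction t) auto

lemma rename_fm_liftf: "rename_fm f g h (liftf c k A) = liftf c k (rename_fm f g h A)"
  by (induction A arbitrary: c) (auto simp: rename_trm_liftt)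

lemma rename_fm_liftso: "rename_fm f g h (liftso c k A) = liftso c k (rename_fm f g h A)"
  by (induction A arbitrary: c) (auto split: prd.split)

lemma rename_fm_substf:
  "rename_fm f g h (substf d us A) = substf d (map (rename_trm f) us) (rename_fm f g h A)"
  by (induction A arbitrary: d) (auto simp: rename_trm_substt)

lemma rename_fm_substso:
  "rename_fm f g h (substso e d G A) = substso e d (rename_fm f g h G) (rename_fm f g h A)"
  by (induction A arbitrary: e d)
    (auto split: prd.split simp: rename_fm_substf rename_fm_liftf rename_fm_liftso)

lemma rename_fm_closeso:
  "inj (h n) \<Longrightarrow> rename_fm f g h (closeso (c, n) e A) = closeso (h n c, n) e (rename_fm f g h A)"
  by (induction A arbitrary: e) (auto split: prd.split simp: inj_eq)

lemma map_rename_trm_bvs [simp]: "map (rename_trm f) (bvs n) = bvs n"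
  by (simp add: bvs_def)

lemma rename_fm_Alls: "rename_fm f g h (Alls n A) = Alls n (rename_fm f g h A)"
  by (induction n) (auto simp: Alls_def)

lemma rename_fm_unfold:
  "rename_fm f g h (unfold n D ts) = unfold n (rename_fm f g h D) (map (rename_trm f) ts)"
  by (simp add: unfold_def rename_fm_substf rename_fm_substso rename_fm_liftf)

lemma fvf_rename_fm: "fvf (rename_fm f g h A) = f ` fvf A"
  by (induction A) (auto simp: fvt_rename_trm)

lemma fvso_rename_fm: "fvso (rename_fm f g h A) = (\<lambda>(X, m). (g m X, m)) ` fvso A"
  by (induction A) (auto split: prd.split)

lemma syms_rename_fm: "syms (rename_fm f g h A) = (\<lambda>(s, m). (h m s, m)) ` syms A"
  by (induction A) (auto split: prd.split)

lemma syms_closeso: "syms (closeso c e A) \<subseteq> syms A - {c}"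
  by (induction A arbitrary: e) (auto split: prd.split)

lemma rename_prd_eq_PB [simp]: "rename_prd g h p = PB j \<longleftrightarrow> p = PB j"
  by (cases p) auto

lemma occ_rename_fm [simp]: "occ j (rename_fm f g h A) = occ j A"
  by (induction A arbitrary: j) (auto split: prd.split)

lemma pol_rename_fm [simp]: "pol b j (rename_fm f g h A) = pol b j A"
  by (induction A arbitrary: b j) (auto split: prd.split)

lemma wf_rename_fm [simp]: "wf k ar (rename_fm f g h A) = wf k ar A"
  by (induction A arbitrary: k ar) (auto split: prd.split)

lemma ty_rename_fm [simp]: "ty (rename_fm f g h A) = ty A"
  by (simp add: ty_def)

lemma rename_fm_cong:
  assumes "\<And>x. x \<in> fvf A \<Longrightarrow> f x = f' x"
    and "\<And>X m. (X, m) \<in> fvso A \<Longrightarrow> g m X = g' m X"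
    and "\<And>s m. (s, m) \<in> syms A \<Longrightarrow> h m s = h' m s"
  shows "rename_fm f g h A = rename_fm f' g' h' A"
  using assms
proof (induction A)
  case (Atom p ts)
  then show ?case by (cases p) (auto intro: rename_trm_cong)
qed (auto intro: rename_trm_cong)

lemma rename_prd_id [simp]: "rename_prd (\<lambda>_ x. x) (\<lambda>_ x. x) p = p"
  by (cases p) auto

lemma rename_fm_id [simp]: "rename_fm (\<lambda>x. x) (\<lambda>_ x. x) (\<lambda>_ x. x) A = A"
  by (induction A) (auto simp: map_idI)

lemma finite_fvf: "finite (fvf A)"
  by (induction A) (auto simp: finite_fvt)

lemma finite_fvso: "finite (fvso A)"
  by (induction A) (auto split: prd.split)

lemma finite_syms: "finite (syms A)"
  by (induction A) (auto split: prd.split)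

lemma sub_rename_fm:
  assumes "sub Eqs A B" and "inj f" and "\<And>m. inj (g m)"
  shows "sub Eqs (rename_fm f g h A) (rename_fm f g h B)"
  using assms(1)
proof (induction rule: sub.induct)
  case (s_refl A)
  show ?case by (rule sub.s_refl)
next
  case (s_imp A A' B B')
  then show ?case by (auto intro: sub.s_imp)
next
  case (s_allL u A B)
  then have "sub Eqs (substf 0 [rename_trm f u] (rename_fm f g h A)) (rename_fm f g h B)"
    by (simp add: rename_fm_substf)
  with s_allL.hyps show ?case by (auto intro: sub.s_allL)
next
  case (s_all2L G A B n)
  then have "sub Eqs (substso 0 0 (rename_fm f g h G) (rename_fm f g h A)) (rename_fm f g h B)"
    by (simp add: rename_fm_substso)
  with s_all2L.hyps show ?case by (auto intro: sub.s_all2L)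
next
  case (s_allR A x B)
  have "sub Eqs (rename_fm f g h A) (substf 0 [FV (f x)] (rename_fm f g h B))"
    using s_allR.IH by (simp add: rename_fm_substf)
  moreover have "f x \<notin> fvf (rename_fm f g h A)" "f x \<notin> fvf (rename_fm f g h B)"
    using s_allR.hyps assms(2) by (auto simp: fvf_rename_fm inj_eq)
  ultimately show ?case by (auto intro: sub.s_allR)
next
  case (s_all2R A X n B)
  have "sub Eqs (rename_fm f g h A) (substso 0 0 (Atom (PV (g n X) n) (bvs n)) (rename_fm f g h B))"
    using s_all2R.IH by (simp add: rename_fm_substso)
  moreover have "(g n X, n) \<notin> fvso (rename_fm f g h A)" "(g n X, n) \<notin> fvso (rename_fm f g h B)"
    using s_all2R.hyps assms(3) by (auto simp: fvso_rename_fm inj_eq)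
  ultimately show ?case by (auto intro: sub.s_all2R)
next
  case (s_eq A v B w)
  have "sub Eqs (rename_fm f g h A) (substf 0 [rename_trm f v] (rename_fm f g h B))"
    using s_eq.IH by (simp add: rename_fm_substf)
  then have "sub Eqs (rename_fm f g h A) (substf 0 [rename_trm f w] (rename_fm f g h B))"
    using eq_inst_rename_trm[OF s_eq.hyps(2)] by (rule sub.s_eq)
  then show ?case by (simp add: rename_fm_substf)
next
  case (s_trans A B C)
  then show ?case by (auto intro: sub.s_trans)
next
  case (s_fold n D ts)
  then have "ty (Mu n (rename_fm f g h D) (map (rename_trm f) ts))"
    using ty_rename_fm[of f g h "Mu n D ts"] by simp
  then show ?case by (simp add: rename_fm_unfold sub.s_fold)
next
  case (s_unfold n D ts)
  then have "ty (Mu n (rename_fm f g h D) (map (rename_trm f) ts))"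
    using ty_rename_fm[of f g h "Mu n D ts"] by simp
  then show ?case by (simp add: rename_fm_unfold sub.s_unfold)
next
  case (s_ind n D ts ys F)
  have "ty (Mu n (rename_fm f g h D) (map (rename_trm f) ts))"
    using s_ind.hyps(1) ty_rename_fm[of f g h "Mu n D ts"] by simp
  moreover have "distinct (map f ys)"
    using s_ind.hyps(3) assms(2) by (simp add: distinct_map inj_on_subset[OF assms(2)])
  moreover have "set (map f ys) \<inter> (fvf (rename_fm f g h D) \<union> fvf (rename_fm f g h F)) = {}"
    using s_ind.hyps(4) assms(2) by (auto simp: fvf_rename_fm inj_eq)
  moreover have "sub Eqs
      (substf 0 (map FV (map f ys)) (substso 0 0 (liftf n n (rename_fm f g h F)) (rename_fm f g h D)))
      (substf 0 (map FV (map f ys)) (rename_fm f g h F))"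
    using s_ind.IH by (simp add: rename_fm_substf rename_fm_substso rename_fm_liftf comp_def)
  ultimately have "sub Eqs (Mu n (rename_fm f g h D) (map (rename_trm f) ts))
      (substf 0 (map (rename_trm f) ts) (rename_fm f g h F))"
    using s_ind.hyps(2) by (intro sub.s_ind) auto
  then show ?case by (simp add: rename_fm_substf)
qed

lemma obtain_fresh_inj_update:
  fixes f :: "nat \<Rightarrow> nat"
  assumes "inj f" and "finite S" and "finite N"
  obtains f' where "inj f'" and "f' x \<notin> N" and "\<And>z. z \<in> S \<Longrightarrow> z \<noteq> x \<Longrightarrow> f' z = f z"
proof -
  have "finite (N \<union> f ` S \<union> {f x})" using assms(2,3) by simp
  then have "\<exists>y. y \<notin> N \<union> f ` S \<union> {f x}" by (rule ex_new_if_finite[OF infinite_UNIV_nat])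
  then obtain y where y: "y \<notin> N \<union> f ` S \<union> {f x}" ..
  show ?thesis
  proof (rule that[of "transpose (f x) y \<circ> f"])
    show "inj (transpose (f x) y \<circ> f)"
      using assms(1) by (simp add: inj_compose inj_transpose)
    show "(transpose (f x) y \<circ> f) x \<notin> N"
      using y by simp
    show "(transpose (f x) y \<circ> f) z = f z" if "z \<in> S" and "z \<noteq> x" for z
    proof -
      have "f z \<noteq> f x" using assms(1) that(2) by (simp add: inj_eq)
      moreover have "f z \<noteq> y" using y that(1) by auto
      ultimately show ?thesis by simp
    qed
  qed
qed

lemma finite_vimage_Pair: "finite T \<Longrightarrow> finite ((\<lambda>z. (z, n)) -` T)"
  by (rule finite_vimageI) (simp_all add: inj_on_def)

definition rename_ctx ::
  "(nat \<Rightarrow> nat) \<Rightarrow> (nat \<Rightarrow> nat \<Rightarrow> nat) \<Rightarrow> (nat \<Rightarrow> nat \<Rightarrow> nat) \<Rightarrow> ctx \<Rightarrow> ctx" where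
  "rename_ctx f g h \<Gamma> = (\<lambda>x. map_option (rename_fm f g h) (\<Gamma> x))"

lemma rename_ctx_upd:
  "rename_ctx f g h (\<Gamma>(x \<mapsto> A)) = (rename_ctx f g h \<Gamma>)(x \<mapsto> rename_fm f g h A)"
  by (auto simp: rename_ctx_def)

lemma rename_ctx_cong:
  "(\<And>A. A \<in> ran \<Gamma> \<Longrightarrow> rename_fm f g h A = rename_fm f' g' h' A)
   \<Longrightarrow> rename_ctx f g h \<Gamma> = rename_ctx f' g' h' \<Gamma>"
  by (auto simp: rename_ctx_def ranI intro!: option.map_cong)

lemma rename_ctx_id: "rename_ctx (\<lambda>x. x) (\<lambda>_ x. x) (\<lambda>_ x. x) \<Gamma> = \<Gamma>"
  by (simp add: rename_ctx_def fun_eq_iff option.map_ident_strong)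

definition ctx_sub :: "(trm \<times> trm) set \<Rightarrow> ctx \<Rightarrow> ctx \<Rightarrow> bool" where
  "ctx_sub Eqs \<Gamma>' \<Gamma> \<longleftrightarrow> (\<forall>x A. \<Gamma> x = Some A \<longrightarrow> (\<exists>A'. \<Gamma>' x = Some A' \<and> sub Eqs A' A))"

lemma ctx_sub_upd: "ctx_sub Eqs \<Gamma>' \<Gamma> \<Longrightarrow> ctx_sub Eqs (\<Gamma>'(x \<mapsto> A)) (\<Gamma>(x \<mapsto> A))"
  by (auto simp: ctx_sub_def intro: sub.s_refl)

lemma finite_ran_upd: "finite (ran \<Gamma>) \<Longrightarrow> finite (ran (\<Gamma>(x \<mapsto> A)))"
  by (rule finite_subset[of _ "insert A (ran \<Gamma>)"]) (auto simp: ran_def)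

lemma finite_fv_ctx: "finite (ran \<Gamma>) \<Longrightarrow> finite (fv_ctx \<Gamma>)"
  by (simp add: fv_ctx_def finite_fvf)

lemma finite_fvso_ctx: "finite (ran \<Gamma>) \<Longrightarrow> finite (fvso_ctx \<Gamma>)"
  by (simp add: fvso_ctx_def finite_fvso)

lemma finite_syms_ctx: "finite (ran \<Gamma>) \<Longrightarrow> finite (syms_ctx \<Gamma>)"
  by (simp add: syms_ctx_def finite_syms)

lemma typing_rename_ctx_sub:
  assumes "typing Eqs \<Gamma> t A"
    and "finite (ran \<Gamma>)" and "finite (ran \<Gamma>')"
    and "inj f" and "\<And>m. inj (g m)" and "\<And>m. inj (h m)"
    and "ctx_sub Eqs \<Gamma>' (rename_ctx f g h \<Gamma>)"
  shows "typing Eqs \<Gamma>' t (rename_fm f g h A)"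
  using assms
proof (induction arbitrary: f g h \<Gamma>' rule: typing.induct)
  case (t_var \<Gamma> x A)
  then have "rename_ctx f g h \<Gamma> x = Some (rename_fm f g h A)"
    by (simp add: rename_ctx_def)
  with t_var.prems(6) obtain A' where "\<Gamma>' x = Some A'" "sub Eqs A' (rename_fm f g h A)"
    unfolding ctx_sub_def by blast
  then show ?case by (blast intro: typing.t_var typing.t_sub)
next
  case (t_abs \<Gamma> x A t B)
  have "typing Eqs (\<Gamma>'(x \<mapsto> rename_fm f g h A)) t (rename_fm f g h B)"
    using t_abs.prems
    by (intro t_abs.IH finite_ran_upd) (simp_all only: rename_ctx_upd ctx_sub_upd)
  then show ?case by (simp add: typing.t_abs)
next
  case (t_app \<Gamma> t A B u)
  have "typing Eqs \<Gamma>' t (rename_fm f g h (Imp A B))"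
    by (rule t_app.IH(1)) (use t_app.prems in auto)
  moreover have "typing Eqs \<Gamma>' u (rename_fm f g h A)"
    by (rule t_app.IH(2)) (use t_app.prems in auto)
  ultimately show ?case by (auto intro: typing.t_app)
next
  case (t_allI \<Gamma> t x A)
  have "finite (fv_ctx \<Gamma> \<union> fvf A)" "finite (fv_ctx \<Gamma>' \<union> fvf (rename_fm f g h A))"
    using t_allI.prems(1,2) by (simp_all add: finite_fv_ctx finite_fvf)
  then obtain f' where "inj f'" and fresh: "f' x \<notin> fv_ctx \<Gamma>' \<union> fvf (rename_fm f g h A)"
    and agree: "\<And>z. z \<in> fv_ctx \<Gamma> \<union> fvf A \<Longrightarrow> z \<noteq> x \<Longrightarrow> f' z = f z"
    by (rule obtain_fresh_inj_update[where x = x, OF t_allI.prems(3)]) blast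
  have rename_agree: "rename_fm f' g h B = rename_fm f g h B"
    if "x \<notin> fvf B" and "fvf B \<subseteq> fv_ctx \<Gamma> \<union> fvf A" for B
    by (rule rename_fm_cong) (use that agree in auto)
  have "rename_ctx f' g h \<Gamma> = rename_ctx f g h \<Gamma>"
    using t_allI.hyps(2) by (intro rename_ctx_cong rename_agree) (auto simp: fv_ctx_def)
  with \<open>inj f'\<close> have "typing Eqs \<Gamma>' t (rename_fm f' g h (substf 0 [FV x] A))"
    using t_allI.prems by (intro t_allI.IH) auto
  moreover have "rename_fm f' g h A = rename_fm f g h A"
    using t_allI.hyps(3) by (intro rename_agree) auto
  ultimately have "typing Eqs \<Gamma>' t (substf 0 [FV (f' x)] (rename_fm f g h A))"
    by (simp add: rename_fm_substf)
  then have "typing Eqs \<Gamma>' t (All (rename_fm f g h A))"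
    by (rule typing.t_allI) (use fresh in auto)
  then show ?case by simp
next
  case (t_allE \<Gamma> t A u)
  have "typing Eqs \<Gamma>' t (rename_fm f g h (All A))"
    by (rule t_allE.IH) (use t_allE.prems in auto)
  then have "typing Eqs \<Gamma>' t (substf 0 [rename_trm f u] (rename_fm f g h A))"
    using t_allE.hyps(2) by (auto intro: typing.t_allE)
  then show ?case by (simp add: rename_fm_substf)
next
  case (t_all2I \<Gamma> t X n A)
  have "finite ((\<lambda>Z. (Z, n)) -` (fvso_ctx \<Gamma> \<union> fvso A))"
    and "finite ((\<lambda>Z. (Z, n)) -` (fvso_ctx \<Gamma>' \<union> fvso (rename_fm f g h A)))"
    using t_all2I.prems(1,2) by (simp_all add: finite_vimage_Pair finite_fvso_ctx finite_fvso)
  then obtain \<phi> where "inj \<phi>"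
    and fresh: "(\<phi> X, n) \<notin> fvso_ctx \<Gamma>' \<union> fvso (rename_fm f g h A)"
    and agree: "\<And>Z. (Z, n) \<in> fvso_ctx \<Gamma> \<union> fvso A \<Longrightarrow> Z \<noteq> X \<Longrightarrow> \<phi> Z = g n Z"
    by (rule obtain_fresh_inj_update[where x = X, OF t_all2I.prems(4)]) auto
  define g' where "g' = g(n := \<phi>)"
  have rename_agree: "rename_fm f g' h B = rename_fm f g h B"
    if "(X, n) \<notin> fvso B" and "fvso B \<subseteq> fvso_ctx \<Gamma> \<union> fvso A" for B
    by (rule rename_fm_cong) (use that agree in \<open>auto simp: g'_def\<close>)
  have "\<And>m. inj (g' m)" and "g' n X = \<phi> X"
    using \<open>inj \<phi>\<close> t_all2I.prems(4) by (simp_all add: g'_def)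
  have "rename_ctx f g' h \<Gamma> = rename_ctx f g h \<Gamma>"
    using t_all2I.hyps(2) by (intro rename_ctx_cong rename_agree) (auto simp: fvso_ctx_def)
  with \<open>\<And>m. inj (g' m)\<close>
  have "typing Eqs \<Gamma>' t (rename_fm f g' h (substso 0 0 (Atom (PV X n) (bvs n)) A))"
    using t_all2I.prems by (intro t_all2I.IH) auto
  moreover have "rename_fm f g' h A = rename_fm f g h A"
    using t_all2I.hyps(3) by (intro rename_agree) auto
  ultimately have "typing Eqs \<Gamma>' t (substso 0 0 (Atom (PV (g' n X) n) (bvs n)) (rename_fm f g h A))"
    by (simp add: rename_fm_substso)
  then have "typing Eqs \<Gamma>' t (All2 n (rename_fm f g h A))"
    by (rule typing.t_all2I) (use fresh \<open>g' n X = \<phi> X\<close> in auto)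
  then show ?case by simp
next
  case (t_all2E \<Gamma> t n A G)
  have "typing Eqs \<Gamma>' t (rename_fm f g h (All2 n A))"
    by (rule t_all2E.IH) (use t_all2E.prems in auto)
  then have "typing Eqs \<Gamma>' t (substso 0 0 (rename_fm f g h G) (rename_fm f g h A))"
    using t_all2E.hyps(2) by (auto intro: typing.t_all2E)
  then show ?case by (simp add: rename_fm_substso)
next
  case (t_eq \<Gamma> t v A w)
  have "typing Eqs \<Gamma>' t (rename_fm f g h (substf 0 [v] A))"
    by (rule t_eq.IH) (use t_eq.prems in auto)
  then have "typing Eqs \<Gamma>' t (substf 0 [rename_trm f w] (rename_fm f g h A))"
    using eq_inst_rename_trm[OF t_eq.hyps(2)] by (simp add: rename_fm_substf typing.t_eq)
  then show ?case by (simp add: rename_fm_substf)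
next
  case (t_sub \<Gamma> t A B)
  have "typing Eqs \<Gamma>' t (rename_fm f g h A)"
    by (rule t_sub.IH) (use t_sub.prems in auto)
  moreover have "sub Eqs (rename_fm f g h A) (rename_fm f g h B)"
    using t_sub.hyps(2) t_sub.prems(3,4) by (rule sub_rename_fm)
  ultimately show ?case by (rule typing.t_sub)
next
  case (t_Y \<Gamma> t n c F D)
  have "finite ((\<lambda>s. (s, n)) -` (syms_ctx \<Gamma> \<union> syms F \<union> syms D))"
    and "finite ((\<lambda>s. (s, n)) -` (syms_ctx \<Gamma>' \<union> syms (rename_fm f g h F)))"
    using t_Y.prems(1,2) by (simp_all add: finite_vimage_Pair finite_syms_ctx finite_syms)
  then obtain \<psi> where "inj \<psi>"
    and fresh: "(\<psi> c, n) \<notin> syms_ctx \<Gamma>' \<union> syms (rename_fm f g h F)"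
    and agree: "\<And>s. (s, n) \<in> syms_ctx \<Gamma> \<union> syms F \<union> syms D \<Longrightarrow> s \<noteq> c \<Longrightarrow> \<psi> s = h n s"
    by (rule obtain_fresh_inj_update[where x = c, OF t_Y.prems(5)]) auto
  define h' where "h' = h(n := \<psi>)"
  have rename_agree: "rename_fm f g h' B = rename_fm f g h B"
    if "(c, n) \<notin> syms B" and "syms B \<subseteq> syms_ctx \<Gamma> \<union> syms F \<union> syms D" for B
    by (rule rename_fm_cong) (use that agree in \<open>auto simp: h'_def\<close>)
  have "\<And>m. inj (h' m)" and "h' n c = \<psi> c"
    using \<open>inj \<psi>\<close> t_Y.prems(5) by (simp_all add: h'_def)
  have "rename_ctx f g h' \<Gamma> = rename_ctx f g h \<Gamma>"
    using t_Y.hyps(3) by (intro rename_ctx_cong rename_agree) (auto simp: syms_ctx_def)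
  with \<open>\<And>m. inj (h' m)\<close> have "typing Eqs \<Gamma>' t (rename_fm f g h'
      (Imp (Alls n (Imp (Atom (PS c n) (bvs n)) F)) (Alls n (Imp D F))))"
    using t_Y.prems by (intro t_Y.IH) auto
  moreover have "rename_fm f g h' F = rename_fm f g h F"
    using t_Y.hyps(2) by (intro rename_agree) auto
  ultimately have premise: "typing Eqs \<Gamma>' t
      (Imp (Alls n (Imp (Atom (PS (h' n c) n) (bvs n)) (rename_fm f g h F)))
        (Alls n (Imp (rename_fm f g h' D) (rename_fm f g h F))))"
    by (simp add: rename_fm_Alls)
  have "rename_fm f g h' (closeso (c, n) 0 D) = rename_fm f g h (closeso (c, n) 0 D)"
    using syms_closeso[of "(c, n)" 0 D] by (intro rename_agree) auto
  then have closeso_D: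
    "closeso (h' n c, n) 0 (rename_fm f g h' D) = rename_fm f g h (closeso (c, n) 0 D)"
    using rename_fm_closeso[of h' n f g c 0 D] \<open>\<And>m. inj (h' m)\<close> by simp
  have conclusion: "rename_fm f g h (Alls n (Imp (Mu n (liftf n n (closeso (c, n) 0 D)) (bvs n)) F))
      = Alls n (Imp (Mu n (liftf n n (closeso (h' n c, n) 0 (rename_fm f g h' D))) (bvs n))
          (rename_fm f g h F))"
    by (simp add: closeso_D rename_fm_Alls rename_fm_liftf)
  have "(h' n c, n) \<notin> syms (rename_fm f g h F)" "(h' n c, n) \<notin> syms_ctx \<Gamma>'"
    using fresh \<open>h' n c = \<psi> c\<close> by auto
  moreover have "ty (Alls n (Imp (Mu n (liftf n n (closeso (h' n c, n) 0 (rename_fm f g h' D))) (bvs n))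
      (rename_fm f g h F)))"
    using t_Y.hyps(4) by (simp flip: conclusion)
  ultimately show ?case
    unfolding conclusion by (rule typing.t_Y[OF premise])
qed

lemma typing_ctx_sub:
  assumes "typing Eqs \<Gamma> t A" and "finite (ran \<Gamma>)" and "finite (ran \<Gamma>')"
    and "ctx_sub Eqs \<Gamma>' \<Gamma>"
  shows "typing Eqs \<Gamma>' t A"
  using typing_rename_ctx_sub[OF assms(1-3), of "\<lambda>x. x" "\<lambda>_ x. x" "\<lambda>_ x. x"] assms(4)
  by (simp add: rename_ctx_id)

lemma ctx_sub_map_of_zip:
  assumes "distinct xs" and "length As = length xs" and "length Bs = length xs"
    and "\<forall>i<length xs. sub Eqs (Bs ! i) (As ! i)"
  shows "ctx_sub Eqs (map_of (zip xs Bs)) (map_of (zip xs As))"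
  unfolding ctx_sub_def
proof (intro allI impI)
  fix x A
  assume "map_of (zip xs As) x = Some A"
  then have "(x, A) \<in> set (zip xs As)" by (rule map_of_SomeD)
  then obtain i where "i < length xs" "xs ! i = x" "As ! i = A"
    using assms(2) by (auto simp: set_zip)
  with assms show "\<exists>A'. map_of (zip xs Bs) x = Some A' \<and> sub Eqs A' A"
    by (metis map_of_zip_nth)
qed

theorem lemma4p9:
  fixes Eqs :: "(trm \<times> trm) set" and xs :: "nat list" and As Bs :: "fm list"
    and t :: lam and A B :: fm
  assumes "distinct xs" and "length As = length xs" and "length Bs = length xs"
    and "\<forall>C\<in>set As. ty C" and "\<forall>C\<in>set Bs. ty C" and "ty A" and "ty B"
    and "typing Eqs (map_of (zip xs As)) t A"
    and "\<forall>i<length xs. sub Eqs (Bs ! i) (As ! i)"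
    and "sub Eqs A B"
  shows "typing Eqs (map_of (zip xs Bs)) t B"
proof -
  have "ctx_sub Eqs (map_of (zip xs Bs)) (map_of (zip xs As))"
    using assms(1-3,9) by (rule ctx_sub_map_of_zip)
  then have "typing Eqs (map_of (zip xs Bs)) t A"
    by (rule typing_ctx_sub[OF assms(8), rotated 2]) (simp_all add: finite_ran finite_dom_map_of)
  then show ?thesis using assms(10) by (rule typing.t_sub)
qed

end
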